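(* Let $p$ be an odd prime and let $J$ be a finite family of lattice points in $\mathbb{Z}^2$ (repetitions allowed) with $|J|=3p-2$ or $|J|=3p-1$. If $(p,J)=0$, then $(2p,J)\equiv -1 \pmod p$.
   Context: For a finite family $X$ of lattice points in $\mathbb{Z}^2$ (points may repeat; subsets are subfamilies, i.e. subsets of the index set) and an integer $n\ge 0$, $(n,X)$ denotes the number of $n$-element subfamilies of $X$ whose coordinatewise sum is congruent to $(0,0)$ modulo $p$. *)

theory Defs
  imports "HOL-Number_Theory.Number_Theory"
begin

text \<open>A finite family of lattice points in Z^2 (repetitions allowed) is modelled as a list;
  subfamilies are subsets of the index set {..<length J}.
  zero_sum_count p n J is the number of n-element subfamilies whose coordinatewise sum
  is congruent to (0,0) modulo p.\<close>

definition zero_sum_count :: "nat \<Rightarrow> nat \<Rightarrow> (int \<times> int) list \<Rightarrow> nat" where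
  "zero_sum_count p n J =
     card {I. I \<subseteq> {..<length J} \<and> card I = n \<and>
              [(\<Sum>i\<in>I. fst (J ! i)) = 0] (mod int p) \<and>
              [(\<Sum>i\<in>I. snd (J ! i)) = 0] (mod int p)}"

end

theory Submission
  imports Defs
begin

text \<open>Both linear congruences and the size condition are detected, modulo p, by the factor
  \<open>1 - t ^ (p - 1)\<close>, so the indicator of zero-sum subfamilies whose size is a multiple of p is,
  modulo p, a product of \<open>3(p - 1)\<close> affine functions of the subfamily. Such a product has
  vanishing alternating sum over all subsets of an index set with more than \<open>3(p - 1)\<close> elements
  (a finite-difference form of the Chevalley--Warning theorem). Since \<open>|J| < 3p\<close>, the indicator
  only picks up subfamilies of sizes 0, p and 2p, whence \<open>0 \<equiv> 1 - (p,J) + (2p,J) (mod p)\<close>.\<close>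

definition alternating_sum :: "'a set \<Rightarrow> ('a set \<Rightarrow> int) \<Rightarrow> int" where
  "alternating_sum N g = (\<Sum>I\<in>Pow N. (-1) ^ card I * g I)"

definition affine_set_fun :: "'a set \<Rightarrow> ('a set \<Rightarrow> int) \<Rightarrow> bool" where
  "affine_set_fun N f \<longleftrightarrow> (\<exists>c a. \<forall>I\<subseteq>N. f I = c + (\<Sum>i\<in>I. a i))"

lemma alternating_sum_cong:
  "(\<And>I. I \<subseteq> N \<Longrightarrow> g I = h I) \<Longrightarrow> alternating_sum N g = alternating_sum N h"
  unfolding alternating_sum_def by (rule sum.cong) auto

lemma alternating_sum_add:
  "alternating_sum N (\<lambda>I. g I + h I) = alternating_sum N g + alternating_sum N h"
  unfolding alternating_sum_def by (simp add: algebra_simps sum.distrib)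

lemma alternating_sum_diff:
  "alternating_sum N (\<lambda>I. g I - h I) = alternating_sum N g - alternating_sum N h"
  unfolding alternating_sum_def by (simp add: algebra_simps sum_subtractf)

lemma alternating_sum_cmult:
  "alternating_sum N (\<lambda>I. d * g I) = d * alternating_sum N g"
  unfolding alternating_sum_def by (simp add: algebra_simps sum_distrib_left)

lemma alternating_sum_insert:
  assumes "finite N" "x \<notin> N"
  shows "alternating_sum (insert x N) g = alternating_sum N (\<lambda>I. g I - g (insert x I))"
proof -
  have inj: "inj_on (insert x) (Pow N)"
    using assms(2) by (auto simp: inj_on_def)
  have "alternating_sum (insert x N) g
      = (\<Sum>I\<in>Pow N. (-1) ^ card I * g I) + (\<Sum>I\<in>insert x ` Pow N. (-1) ^ card I * g I)"
    unfolding alternating_sum_def Pow_insert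
    by (rule sum.union_disjoint) (use assms in auto)
  also have "(\<Sum>I\<in>insert x ` Pow N. (-1) ^ card I * g I)
      = (\<Sum>I\<in>Pow N. (-1) ^ card (insert x I) * g (insert x I))"
    by (rule sum.reindex[OF inj, unfolded comp_def])
  also have "\<dots> = (\<Sum>I\<in>Pow N. - ((-1) ^ card I * g (insert x I)))"
  proof (rule sum.cong)
    fix I assume "I \<in> Pow N"
    then have "finite I" "x \<notin> I"
      using assms finite_subset by auto
    then show "(-1) ^ card (insert x I) * g (insert x I) = - ((-1) ^ card I * g (insert x I))"
      by simp
  qed simp
  finally show ?thesis
    unfolding alternating_sum_def by (simp add: sum_negf sum_subtractf[symmetric] algebra_simps)
qed

lemma alternating_sum_indicator:
  assumes "finite N" "S \<subseteq> Pow N" "\<And>I. I \<in> S \<Longrightarrow> card I = k"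
  shows "alternating_sum N (\<lambda>I. of_bool (I \<in> S)) = (-1) ^ k * int (card S)"
proof -
  have "alternating_sum N (\<lambda>I. of_bool (I \<in> S)) = (\<Sum>I\<in>Pow N. if I \<in> S then (-1) ^ card I else 0)"
    unfolding alternating_sum_def by (rule sum.cong) auto
  also have "\<dots> = (\<Sum>I\<in>S. (-1) ^ card I)"
    using sum.inter_restrict[of "Pow N" "\<lambda>I. (-1::int) ^ card I" S] assms(1,2)
    by (simp add: Int_absorb1)
  also have "\<dots> = (\<Sum>I\<in>S. (-1) ^ k)"
    using assms(3) by simp
  finally show ?thesis by simp
qed

lemma affine_set_fun_sum: "affine_set_fun N (\<lambda>I. \<Sum>i\<in>I. a i)"
  unfolding affine_set_fun_def by (rule exI[of _ 0], rule exI[of _ a]) simp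

lemma affine_set_fun_card: "affine_set_fun N (\<lambda>I. int (card I))"
  unfolding affine_set_fun_def by (rule exI[of _ 0], rule exI[of _ "\<lambda>_. 1"]) simp

lemma affine_set_fun_subset:
  "affine_set_fun N f \<Longrightarrow> M \<subseteq> N \<Longrightarrow> affine_set_fun M f"
  unfolding affine_set_fun_def by (meson order_trans)

lemma affine_set_fun_insert_shift:
  assumes "affine_set_fun (insert x N) f" "finite N" "x \<notin> N"
  shows "\<exists>d. \<forall>I\<subseteq>N. f (insert x I) = f I + d"
proof -
  obtain c a where ca: "\<And>I. I \<subseteq> insert x N \<Longrightarrow> f I = c + (\<Sum>i\<in>I. a i)"
    using assms(1) unfolding affine_set_fun_def by blast
  have "f (insert x I) = f I + a x" if "I \<subseteq> N" for I
  proof -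
    have "finite I" "x \<notin> I"
      using that assms(2,3) finite_subset by auto
    moreover have "insert x I \<subseteq> insert x N" "I \<subseteq> insert x N"
      using that by auto
    ultimately show ?thesis
      using ca by simp
  qed
  then show ?thesis by blast
qed

lemma affine_set_fun_add_const:
  "affine_set_fun N f \<Longrightarrow> \<forall>I\<subseteq>N. g I = f I + d \<Longrightarrow> affine_set_fun N g"
  unfolding affine_set_fun_def by (metis add.assoc add.commute)

text \<open>The finite-difference step: shifting each factor by a constant changes the product only by
  terms with fewer affine factors.\<close>

lemma alternating_sum_prod_shift:
  assumes vanish: "\<And>hs. \<forall>h\<in>set hs. affine_set_fun N h \<Longrightarrow> length hs < card N \<Longrightarrow>
      alternating_sum N (\<lambda>I. \<Prod>h\<leftarrow>hs. h I) = 0"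
  shows "\<forall>f\<in>set fs. \<exists>d. \<forall>I\<subseteq>N. s f I = f I + d \<Longrightarrow>
    \<forall>f\<in>set K \<union> set fs. affine_set_fun N f \<Longrightarrow> length K + length fs \<le> card N \<Longrightarrow>
    alternating_sum N (\<lambda>I. \<Prod>h\<leftarrow>K @ map s fs. h I) = alternating_sum N (\<lambda>I. \<Prod>h\<leftarrow>K @ fs. h I)"
proof (induction fs arbitrary: K)
  case Nil
  then show ?case by simp
next
  case (Cons f fs)
  obtain d where d: "\<forall>I\<subseteq>N. s f I = f I + d"
    using Cons.prems(1) by auto
  have "affine_set_fun N (s h)" if h: "h \<in> set fs" for h
  proof -
    have "\<exists>e. \<forall>I\<subseteq>N. s h I = h I + e"
      using Cons.prems(1) h by simp
    moreover have "affine_set_fun N h"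
      using Cons.prems(2) h by simp
    ultimately show ?thesis
      using affine_set_fun_add_const by blast
  qed
  then have vanishing: "alternating_sum N (\<lambda>I. \<Prod>h\<leftarrow>K @ map s fs. h I) = 0"
    using vanish[of "K @ map s fs"] Cons.prems(2,3) by fastforce
  have "alternating_sum N (\<lambda>I. \<Prod>h\<leftarrow>K @ map s (f # fs). h I)
      = alternating_sum N (\<lambda>I. (\<Prod>h\<leftarrow>(K @ [f]) @ map s fs. h I) + d * (\<Prod>h\<leftarrow>K @ map s fs. h I))"
    by (rule alternating_sum_cong) (simp add: d algebra_simps)
  also have "\<dots> = alternating_sum N (\<lambda>I. \<Prod>h\<leftarrow>(K @ [f]) @ map s fs. h I)"
    by (simp only: alternating_sum_add alternating_sum_cmult vanishing)
  also have "\<dots> = alternating_sum N (\<lambda>I. \<Prod>h\<leftarrow>K @ f # fs. h I)"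
    using Cons.IH[of "K @ [f]"] Cons.prems by simp
  finally show ?case .
qed

theorem alternating_sum_prod_affine_eq_0:
  assumes "finite N" "\<forall>f\<in>set fs. affine_set_fun N f" "length fs < card N"
  shows "alternating_sum N (\<lambda>I. \<Prod>f\<leftarrow>fs. f I) = 0"
  using assms
proof (induction N arbitrary: fs rule: finite_induct)
  case empty
  then show ?case by simp
next
  case (insert x N)
  have "\<forall>f\<in>set fs. \<exists>d. \<forall>I\<subseteq>N. f (insert x I) = f I + d"
    using insert.prems(1) affine_set_fun_insert_shift[OF _ insert.hyps] by blast
  moreover have "\<forall>f\<in>set fs. affine_set_fun N f"
    using insert.prems(1) affine_set_fun_subset[of "insert x N" _ N] by blast
  ultimately have "alternating_sum N (\<lambda>I. \<Prod>f\<leftarrow>fs. f (insert x I))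
      = alternating_sum N (\<lambda>I. \<Prod>f\<leftarrow>fs. f I)"
    using alternating_sum_prod_shift[OF insert.IH, of fs "\<lambda>f I. f (insert x I)" "[]"]
      insert.prems(2) insert.hyps
    by (simp add: comp_def)
  then show ?case
    using insert.hyps by (simp add: alternating_sum_insert alternating_sum_diff)
qed

lemma alternating_sum_prod_one_minus_power_eq_0:
  assumes "finite N" "\<forall>f\<in>set (K @ fs). affine_set_fun N f" "length K + d * length fs < card N"
  shows "alternating_sum N (\<lambda>I. (\<Prod>g\<leftarrow>K. g I) * (\<Prod>f\<leftarrow>fs. 1 - f I ^ d)) = 0"
  using assms(2,3)
proof (induction fs arbitrary: K)
  case Nil
  then show ?case
    using alternating_sum_prod_affine_eq_0[OF assms(1)] by simp
next
  case (Cons f fs)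
  have "alternating_sum N (\<lambda>I. (\<Prod>g\<leftarrow>K. g I) * (\<Prod>f\<leftarrow>f # fs. 1 - f I ^ d))
      = alternating_sum N (\<lambda>I. (\<Prod>g\<leftarrow>K. g I) * (\<Prod>f\<leftarrow>fs. 1 - f I ^ d))
        - alternating_sum N (\<lambda>I. (\<Prod>g\<leftarrow>K @ replicate d f. g I) * (\<Prod>f\<leftarrow>fs. 1 - f I ^ d))"
    by (simp add: alternating_sum_diff[symmetric] prod_list_replicate algebra_simps)
  also have "\<dots> = 0"
  proof -
    have "set (replicate d f) \<subseteq> {f}"
      by auto
    then have "\<forall>g\<in>set ((K @ replicate d f) @ fs). affine_set_fun N g"
      using Cons.prems(1) by auto
    moreover have "length (K @ replicate d f) + d * length fs < card N"
      using Cons.prems(2) by simp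
    ultimately show ?thesis
      using Cons.IH[of K] Cons.IH[of "K @ replicate d f"] Cons.prems by simp
  qed
  finally show ?case .
qed

lemma fermat_theorem_int:
  assumes "prime p" "\<not> int p dvd t"
  shows "[t ^ (p - 1) = 1] (mod int p)"
proof -
  define a where "a = nat (t mod int p)"
  have t_cong: "[t = int a] (mod int p)"
    using assms(1) prime_gt_0_nat unfolding a_def by (simp add: cong_def)
  then have "\<not> p dvd a"
    using assms(2) by (metis cong_dvd_iff int_dvd_int_iff)
  then have "[int a ^ (p - 1) = 1] (mod int p)"
    using fermat_theorem[OF assms(1)] by (metis cong_int_iff of_nat_1 of_nat_power)
  then show ?thesis
    using cong_pow[OF t_cong] cong_trans by blast
qed

lemma one_minus_power_cong_indicator:
  assumes "prime p"
  shows "[1 - t ^ (p - 1) = of_bool (int p dvd t)] (mod int p)"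
proof (cases "int p dvd t")
  case True
  then have "[t ^ (p - 1) = 0] (mod int p)"
    using assms prime_gt_1_nat dvd_trans[OF True dvd_power[of "p - 1" t]]
    by (simp add: cong_0_iff)
  then show ?thesis
    using True cong_diff[OF cong_refl[of 1]] by fastforce
next
  case False
  then show ?thesis
    using fermat_theorem_int[OF assms] cong_diff[OF cong_refl[of 1]] by fastforce
qed

lemma cong_prod_list:
  "(\<And>x. x \<in> set xs \<Longrightarrow> [f x = g x] (mod m)) \<Longrightarrow> [(\<Prod>x\<leftarrow>xs. f x) = (\<Prod>x\<leftarrow>xs. g x)] (mod m)"
  by (induction xs) (auto intro: cong_mult)

theorem chevalley_warning_subsets:
  assumes "prime p" "finite N" "\<forall>f\<in>set fs. affine_set_fun N f" "(p - 1) * length fs < card N"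
  shows "[alternating_sum N (\<lambda>I. of_bool (\<forall>f\<in>set fs. int p dvd f I)) = 0] (mod int p)"
proof -
  have "[alternating_sum N (\<lambda>I. \<Prod>f\<leftarrow>fs. 1 - f I ^ (p - 1))
       = alternating_sum N (\<lambda>I. \<Prod>f\<leftarrow>fs. of_bool (int p dvd f I))] (mod int p)"
    unfolding alternating_sum_def
    by (intro cong_sum cong_mult cong_refl cong_prod_list one_minus_power_cong_indicator assms(1))
  moreover have "(\<Prod>f\<leftarrow>fs. of_bool (int p dvd f I)) = (of_bool (\<forall>f\<in>set fs. int p dvd f I) :: int)"
    for I by (induction fs) auto
  ultimately show ?thesis
    using alternating_sum_prod_one_minus_power_eq_0[OF assms(2), of "[]" fs "p - 1"] assms(3,4)
    by (simp add: cong_sym)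
qed

lemma dvd_iff_below_three_times:
  fixes c p :: nat
  assumes "c < 3 * p" "p > 0"
  shows "p dvd c \<longleftrightarrow> c = 0 \<or> c = p \<or> c = 2 * p"
proof
  assume "p dvd c"
  then obtain k where k: "c = p * k" ..
  then have "k < 3"
    using assms by (simp add: mult.commute[of 3 p])
  then have "k = 0 \<or> k = 1 \<or> k = 2"
    by linarith
  then show "c = 0 \<or> c = p \<or> c = 2 * p"
    using k by auto
qed auto

lemma alternating_sum_zero_sum_indicator:
  fixes J :: "(int \<times> int) list"
  assumes "odd p" "length J < 3 * p"
  shows "alternating_sum {..<length J}
      (\<lambda>I. of_bool (int p dvd (\<Sum>i\<in>I. fst (J ! i)) \<and> int p dvd (\<Sum>i\<in>I. snd (J ! i)) \<and> p dvd card I))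
    = 1 - int (zero_sum_count p p J) + int (zero_sum_count p (2 * p) J)"
proof -
  define N where "N = {..<length J}"
  define S where "S k = {I. I \<subseteq> N \<and> card I = k \<and>
      [(\<Sum>i\<in>I. fst (J ! i)) = 0] (mod int p) \<and> [(\<Sum>i\<in>I. snd (J ! i)) = 0] (mod int p)}" for k
  have count: "zero_sum_count p k J = card (S k)" for k
    unfolding zero_sum_count_def S_def N_def ..
  have S_Pow: "S k \<subseteq> Pow N" and S_card: "I \<in> S k \<Longrightarrow> card I = k" for k I
    unfolding S_def by auto
  have "S 0 = {{}}"
    unfolding S_def N_def by (auto dest: finite_subset)
  then have empty_term: "alternating_sum N (\<lambda>I. of_bool (I \<in> S 0)) = 1"
    using alternating_sum_indicator[of N "S 0" 0] by (simp add: N_def)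
  have "p > 0"
    using assms(1) by (intro odd_pos)
  have split: "of_bool (int p dvd (\<Sum>i\<in>I. fst (J ! i)) \<and> int p dvd (\<Sum>i\<in>I. snd (J ! i)) \<and> p dvd card I)
      = of_bool (I \<in> S 0) + of_bool (I \<in> S p) + (of_bool (I \<in> S (2 * p)) :: int)" if "I \<subseteq> N" for I
  proof -
    have "card I < 3 * p"
      using that assms(2) card_mono[of N I] by (simp add: N_def)
    then have size: "p dvd card I \<longleftrightarrow> card I = 0 \<or> card I = p \<or> card I = 2 * p"
      using \<open>p > 0\<close> by (rule dvd_iff_below_three_times)
    have mem: "I \<in> S k \<longleftrightarrow> card I = k \<and> int p dvd (\<Sum>i\<in>I. fst (J ! i)) \<and> int p dvd (\<Sum>i\<in>I. snd (J ! i))"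
      for k
      using that unfolding S_def cong_0_iff by blast
    have "of_bool (P \<and> Q \<and> (c = 0 \<or> c = p \<or> c = 2 * p))
        = of_bool (c = 0 \<and> P \<and> Q) + of_bool (c = p \<and> P \<and> Q) + (of_bool (c = 2 * p \<and> P \<and> Q) :: int)"
      for P Q and c :: nat
      using \<open>p > 0\<close> by (cases "P \<and> Q") auto
    then show ?thesis
      unfolding mem size .
  qed
  have "alternating_sum N
      (\<lambda>I. of_bool (int p dvd (\<Sum>i\<in>I. fst (J ! i)) \<and> int p dvd (\<Sum>i\<in>I. snd (J ! i)) \<and> p dvd card I))
    = alternating_sum N (\<lambda>I. of_bool (I \<in> S 0)) + alternating_sum N (\<lambda>I. of_bool (I \<in> S p))
      + alternating_sum N (\<lambda>I. of_bool (I \<in> S (2 * p)))"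
    by (simp only: alternating_sum_cong[OF split] alternating_sum_add)
  also have "\<dots> = 1 - int (card (S p)) + int (card (S (2 * p)))"
    using empty_term assms(1) alternating_sum_indicator[OF _ S_Pow S_card]
    by (simp add: N_def power_mult)
  finally show ?thesis
    unfolding N_def count .
qed

theorem corollary3:
  fixes p :: nat and J :: "(int \<times> int) list"
  assumes "prime p" and "odd p"
    and "length J = 3 * p - 2 \<or> length J = 3 * p - 1"
    and "zero_sum_count p p J = 0"
  shows "[int (zero_sum_count p (2 * p) J) = -1] (mod int p)"
proof -
  define fs :: "(nat set \<Rightarrow> int) list" where
    "fs = [\<lambda>I. \<Sum>i\<in>I. fst (J ! i), \<lambda>I. \<Sum>i\<in>I. snd (J ! i), \<lambda>I. int (card I)]"
  have "p \<ge> 2"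
    using assms(1) prime_ge_2_nat by blast
  then have length: "(p - 1) * 3 < length J" "length J < 3 * p"
    using assms(3) by auto
  have "\<forall>f\<in>set fs. affine_set_fun {..<length J} f"
    unfolding fs_def by (simp add: affine_set_fun_sum affine_set_fun_card)
  then have "[alternating_sum {..<length J} (\<lambda>I. of_bool (\<forall>f\<in>set fs. int p dvd f I)) = 0] (mod int p)"
    by (rule chevalley_warning_subsets[OF assms(1) finite_lessThan]) (use length(1) in \<open>simp add: fs_def\<close>)
  then have "[1 + int (zero_sum_count p (2 * p) J) = 0] (mod int p)"
    using alternating_sum_zero_sum_indicator[OF assms(2) length(2)] assms(4) by (simp add: fs_def)
  then show ?thesis
    using cong_diff[OF _ cong_refl[of 1]] by fastforce
qed

end
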